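(* Let $M$ be a list of integers and let $\lambda$, $n$ and $m\ge3$ be positive integers. Suppose there is an $(M,m,2)$-decomposition of $\lambda K_n$ in which an $m$-cycle and a $2$-cycle share at least one vertex. Then there is an $(M,m-1,3)$-decomposition of $\lambda K_n$.
   Context: Graphs may have multiple edges but no loops. $\lambda K_n$ is the complete multigraph on $n$ vertices with $\lambda$ edges joining each pair of distinct vertices. For $m\ge 2$, an $m$-cycle is a cycle with $m$ edges; a $2$-cycle consists of two parallel edges. A list is a finite multiset of integers. $(M,a,b)$ denotes $M$ with entries $a,b$ appended. Let $K$ be a graph and let $M=(m_1,\dots,m_t)$ be a list with every $m_i\ge 2$. If every vertex of $K$ has even degree, an $(M)$-decomposition of $K$ is a decomposition $\{G_1,\dots,G_t\}$ of $K$ in which $G_i$ is an $m_i$-cycle for each $i$. If every vertex of $K$ has odd degree, an $(M)$-decomposition of $K$ is a decomposition $\{G_1,\dots,G_t,I\}$ of $K$ in which $G_i$ is an $m_i$-cycle for each $i$ and $I$ is a perfect matching. *)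

theory Defs
  imports "HOL-Library.Multiset"
begin

text \<open>A multigraph on vertex set V is given by a multiset of edges; an edge is a
  2-element set of vertices (so multiple edges are allowed, loops are not).\<close>

type_synonym mgraph = "nat set multiset"

definition complete_multigraph :: "nat \<Rightarrow> nat \<Rightarrow> mgraph" where
  "complete_multigraph lam n =
     (\<Sum>e\<in>{e. \<exists>i j. i < n \<and> j < n \<and> i \<noteq> j \<and> e = {i, j}}. replicate_mset lam e)"

definition degree :: "mgraph \<Rightarrow> nat \<Rightarrow> nat" where
  "degree E v = size (filter_mset (\<lambda>e. v \<in> e) E)"

text \<open>An m-cycle, given by its cyclic list of distinct vertices (m \<ge> 2;
  for m = 2 it consists of two parallel edges).\<close>
definition cycle_edges :: "nat list \<Rightarrow> mgraph" where
  "cycle_edges vs =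
     mset (map (\<lambda>i. {vs ! i, vs ! ((i + 1) mod length vs)}) [0..<length vs])"

definition is_cycle :: "nat \<Rightarrow> nat list \<Rightarrow> bool" where
  "is_cycle m vs \<longleftrightarrow> m \<ge> 2 \<and> length vs = m \<and> distinct vs"

definition perfect_matching :: "nat set \<Rightarrow> mgraph \<Rightarrow> bool" where
  "perfect_matching V I \<longleftrightarrow> (\<forall>e\<in>#I. card e = 2 \<and> e \<subseteq> V) \<and> (\<forall>v\<in>V. degree I v = 1)"

definition is_decomposition :: "nat set \<Rightarrow> mgraph \<Rightarrow> nat list \<Rightarrow> nat list list \<Rightarrow> mgraph \<Rightarrow> bool" where
  "is_decomposition V E M Gs I \<longleftrightarrow>
     length Gs = length M \<and>
     (\<forall>i < length M. is_cycle (M ! i) (Gs ! i)) \<and>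
     ( ((\<forall>v\<in>V. even (degree E v)) \<and> I = {#} \<and>
          E = (\<Sum>G\<leftarrow>Gs. cycle_edges G))
     \<or> ((\<forall>v\<in>V. odd (degree E v)) \<and> perfect_matching V I \<and>
          E = (\<Sum>G\<leftarrow>Gs. cycle_edges G) + I))"

definition has_decomposition :: "nat set \<Rightarrow> mgraph \<Rightarrow> nat list \<Rightarrow> bool" where
  "has_decomposition V E M \<longleftrightarrow> (\<exists>Gs I. is_decomposition V E M Gs I)"

end

theory Submission
  imports Defs "HOL-Library.Indicator_Function" "HOL-Combinatorics.Transposition"
begin

text \<open>Let \<open>C\<close> be the \<open>m\<close>-cycle and \<open>[x\<^sub>0, y]\<close> the 2-cycle, and regard the remaining cycles (and
  the perfect matching) as a packing with leave \<open>C + [x\<^sub>0, y]\<close>. Transposing two vertices \<open>a, b\<close>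
  in a cycle of the packing, or in one of the two \<open>a\<close>-\<open>b\<close>-paths into which \<open>a\<close> and \<open>b\<close> cut it,
  gives a cycle of the same length and changes, for every other vertex \<open>z\<close>, the number of
  \<open>az\<close>-edges minus \<open>bz\<close>-edges by a sum of two signed unit vectors. A chain argument on these
  vectors (the switching lemma) selects pieces whose simultaneous transposition changes the
  leave in exactly two edges: one at \<open>x\<^sub>0\<close> and one at some further vertex \<open>z\<^sub>1\<close>. Switching \<open>y\<close>
  with a suitable vertex of \<open>C\<close>, every possible \<open>z\<^sub>1\<close> either splits the leave into an
  \<open>(m-1)\<close>-cycle and a 3-cycle, or moves the chord \<open>[x\<^sub>0, y]\<close> one step along \<open>C\<close>; the latter
  can happen only finitely often.\<close>

fun path_edges :: "nat list \<Rightarrow> mgraph" where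
  "path_edges (a # b # rest) = add_mset {a, b} (path_edges (b # rest))"
| "path_edges _ = {#}"

lemma path_edges_conv_nth:
  "path_edges xs = mset (map (\<lambda>i. {xs ! i, xs ! (i + 1)}) [0..<length xs - 1])"
proof (induction xs rule: path_edges.induct)
  case (1 a b rest)
  have "[0..<length (a # b # rest) - 1] = 0 # map Suc [0..<length rest]"
    by (simp add: upt_conv_Cons map_Suc_upt del: upt_Suc)
  then show ?case using 1 by (simp add: comp_def)
qed auto

lemma cycle_edges_Cons: "cycle_edges (x # xs) = path_edges (x # xs @ [x])"
proof -
  let ?ys = "x # xs @ [x]"
  have "path_edges ?ys = mset (map (\<lambda>i. {?ys ! i, ?ys ! (i + 1)}) [0..<length xs + 1])"
    by (simp add: path_edges_conv_nth)
  also have "map (\<lambda>i. {?ys ! i, ?ys ! (i + 1)}) [0..<length xs + 1]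
      = map (\<lambda>i. {(x # xs) ! i, (x # xs) ! ((i + 1) mod length (x # xs))}) [0..<length (x # xs)]"
  proof (rule map_cong)
    fix i assume "i \<in> set [0..<length (x # xs)]"
    then have i: "i < length xs + 1" by auto
    have "?ys ! i = (x # xs) ! i" using i by (cases i) (auto simp: nth_append)
    moreover have "?ys ! (i + 1) = (x # xs) ! ((i + 1) mod length (x # xs))"
      using i by (cases "i = length xs") (auto simp: nth_append)
    ultimately show "{?ys ! i, ?ys ! (i + 1)} = {(x # xs) ! i, (x # xs) ! ((i + 1) mod length (x # xs))}"
      by simp
  qed simp
  finally show ?thesis by (simp add: cycle_edges_def)
qed

lemma path_edges_append: "path_edges (xs @ y # ys) = path_edges (xs @ [y]) + path_edges (y # ys)"
proof (induction xs)
  case (Cons x xs)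
  then show ?case by (cases xs) auto
qed simp

lemma path_edges_snoc:
  "path_edges (ys @ [a]) = (if ys = [] then {#} else add_mset {last ys, a} (path_edges ys))"
  by (induction ys rule: path_edges.induct) auto

lemma path_edges_map: "path_edges (map f xs) = image_mset (image f) (path_edges xs)"
  by (induction xs rule: path_edges.induct) auto

lemma path_edges_rev: "path_edges (rev xs) = path_edges xs"
proof (induction xs rule: path_edges.induct)
  case (1 a b rest)
  have "path_edges (rev (a # b # rest)) = add_mset {b, a} (path_edges (rev (b # rest)))"
    using path_edges_snoc[of "rev (b # rest)" a] by simp
  then show ?case using 1 by (simp add: insert_commute)
qed auto

lemma cycle_edges_rotate1: "cycle_edges (rotate1 xs) = cycle_edges xs"
proof (cases xs)
  case (Cons x ys)
  show ?thesis
  proof (cases ys)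
    case (Cons y zs)
    have "cycle_edges (rotate1 xs) = path_edges (y # zs @ [x]) + path_edges [x, y]"
      using \<open>xs = x # ys\<close> Cons path_edges_append[of "y # zs" x "[y]"] by (simp add: cycle_edges_Cons)
    also have "\<dots> = cycle_edges xs"
      using \<open>xs = x # ys\<close> Cons path_edges_append[of "[x, y] @ zs" x "[]"]
        path_edges_append[of "[x]" y "zs @ [x]"]
      by (simp add: cycle_edges_Cons insert_commute)
    finally show ?thesis .
  qed (use Cons in simp)
qed simp

lemma cycle_edges_rotate: "cycle_edges (rotate k xs) = cycle_edges xs"
  by (induction k) (simp_all add: rotate_Suc cycle_edges_rotate1 del: rotate1.simps)

lemma cycle_edges_map: "cycle_edges (map f xs) = image_mset (image f) (cycle_edges xs)"
proof (cases xs)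
  case (Cons a as)
  then show ?thesis using path_edges_map[of f "a # as @ [a]"] by (simp add: cycle_edges_Cons)
qed (simp add: cycle_edges_def)

lemma cycle_edges_Cons_rev: "cycle_edges (x # rev xs) = cycle_edges (x # xs)"
  using path_edges_rev[of "x # xs @ [x]"] by (simp add: cycle_edges_Cons)

lemma cycle_edges_rotate_to:
  assumes "v \<in> set vs"
  obtains ws where "cycle_edges vs = cycle_edges (v # ws)" "mset (v # ws) = mset vs"
proof -
  obtain xs ys where vs: "vs = xs @ v # ys" using assms split_list by metis
  have "cycle_edges vs = cycle_edges (v # ys @ xs)"
    using vs cycle_edges_rotate[of "length xs" vs] by (simp add: rotate_append)
  with vs that show ?thesis by simp
qed

lemma cycle_edges_split:
  "cycle_edges (x # A @ y # B) = path_edges (x # A @ [y]) + path_edges (y # B @ [x])"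
  using path_edges_append[of "x # A" y "B @ [x]"] by (simp add: cycle_edges_Cons)

lemma count_path_edges_notin: "v \<notin> set xs \<Longrightarrow> count (path_edges xs) {v, z} = 0"
  by (induction xs rule: path_edges.induct) (auto simp: doubleton_eq_iff)

lemma count_path_edges_Cons:
  assumes "v \<notin> set xs" "z \<noteq> v"
  shows "count (path_edges (v # xs)) {v, z} = of_bool (xs \<noteq> [] \<and> hd xs = z)"
  using assms count_path_edges_notin[OF assms(1)]
  by (cases xs) (auto simp: doubleton_eq_iff)

lemma count_path_edges_snoc:
  assumes "v \<notin> set xs" "z \<noteq> v"
  shows "count (path_edges (xs @ [v])) {v, z} = of_bool (xs \<noteq> [] \<and> last xs = z)"
  using assms count_path_edges_notin[OF assms(1)]
  by (auto simp: path_edges_snoc doubleton_eq_iff)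

lemma count_cycle_edges_Cons:
  assumes "v \<notin> set A" "A \<noteq> []" "z \<noteq> v"
  shows "count (cycle_edges (v # A)) {v, z} = of_bool (hd A = z) + of_bool (last A = z)"
proof -
  obtain b B where A: "A = b # B" using assms(2) by (cases A) auto
  have "cycle_edges (v # A) = add_mset {v, b} (path_edges (A @ [v]))"
    using A by (simp add: cycle_edges_Cons)
  then show ?thesis
    using count_path_edges_snoc[OF assms(1,3)] A assms by (auto simp: doubleton_eq_iff)
qed

lemma count_cycle_edges_notin:
  assumes "v \<notin> set A"
  shows "count (cycle_edges A) {v, z} = 0"
proof (cases A)
  case (Cons b B)
  then show ?thesis using assms count_path_edges_notin[of v "b # B @ [b]"] by (simp add: cycle_edges_Cons)
qed (simp add: cycle_edges_def)

lemma count_complete_multigraph: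
  "count (complete_multigraph lam n) e
     = (if \<exists>i j. i < n \<and> j < n \<and> i \<noteq> j \<and> e = {i, j} then lam else 0)"
proof -
  let ?E = "{e. \<exists>i j. i < n \<and> j < n \<and> i \<noteq> j \<and> e = {i, j}}"
  have "finite ?E" by (rule finite_subset[of _ "Pow {0..<n}"]) auto
  have "count (complete_multigraph lam n) e = (\<Sum>e'\<in>?E. count (replicate_mset lam e') e)"
    unfolding complete_multigraph_def by (simp add: count_sum)
  also have "\<dots> = (\<Sum>e'\<in>?E. if e' = e then lam else 0)"
    by (rule sum.cong) auto
  also have "\<dots> = (if e \<in> ?E then lam else 0)"
    using \<open>finite ?E\<close> by (simp add: sum.delta')
  finally show ?thesis by simp
qed

lemma count_complete_multigraph_edge:
  "a < n \<Longrightarrow> z < n \<Longrightarrow> a \<noteq> z \<Longrightarrow> count (complete_multigraph lam n) {a, z} = lam"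
  unfolding count_complete_multigraph by auto

lemma count_complete_multigraph_outside:
  assumes "z \<ge> n"
  shows "count (complete_multigraph lam n) {a, z} = 0"
  using assms unfolding count_complete_multigraph by (auto simp: doubleton_eq_iff)

lemma edge_of_complete_multigraph:
  assumes "e \<in># complete_multigraph lam n"
  shows "\<exists>i j. i < n \<and> j < n \<and> i \<noteq> j \<and> e = {i, j}"
proof (rule ccontr)
  assume "\<not> ?thesis"
  then have "count (complete_multigraph lam n) e = 0"
    unfolding count_complete_multigraph by (rule if_not_P)
  with assms show False by (simp add: not_in_iff[symmetric])
qed

lemma cycle_vertices_less:
  assumes "is_cycle (length vs) vs" "cycle_edges vs \<subseteq># complete_multigraph lam n" "v \<in> set vs"
  shows "v < n"
proof -
  obtain ws where ws: "cycle_edges vs = cycle_edges (v # ws)" "mset (v # ws) = mset vs"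
    using cycle_edges_rotate_to[OF assms(3)] .
  obtain w ws' where "ws = w # ws'"
    using mset_eq_length[OF ws(2)] assms(1) by (cases ws) (auto simp: is_cycle_def)
  then have "{v, w} \<in># complete_multigraph lam n"
    using ws(1) assms(2) mset_subset_eqD[of "cycle_edges vs"] by (simp add: cycle_edges_Cons)
  then show ?thesis by (auto dest!: edge_of_complete_multigraph simp: doubleton_eq_iff)
qed

section \<open>Switching two vertices\<close>

definition switch :: "nat \<Rightarrow> nat \<Rightarrow> mgraph \<Rightarrow> mgraph" where
  "switch a b X = image_mset (image (Transposition.transpose a b)) X"

lemma count_switch: "count (switch a b X) e = count X (Transposition.transpose a b ` e)"
proof -
  have "count (image_mset g X) e = count X (g e)" if "\<And>x. g (g x) = x" for g :: "nat set \<Rightarrow> nat set"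
    by (induction X) (use that in auto)
  then show ?thesis unfolding switch_def by (simp add: image_image)
qed

lemma switch_empty [simp]: "switch a b {#} = {#}"
  by (simp add: switch_def)

lemma switch_cycle_edges: "switch a b (cycle_edges vs) = cycle_edges (map (Transposition.transpose a b) vs)"
  by (simp add: switch_def cycle_edges_map)

lemma switch_path_edges: "switch a b (path_edges vs) = path_edges (map (Transposition.transpose a b) vs)"
  by (simp add: switch_def path_edges_map)

lemma perfect_matching_switch:
  assumes "perfect_matching {0..<n} I" "a < n" "b < n"
  shows "perfect_matching {0..<n} (switch a b I)"
  unfolding perfect_matching_def
proof (intro conjI ballI)
  fix e assume "e \<in># switch a b I"
  then obtain e0 where e0: "e0 \<in># I" "e = Transposition.transpose a b ` e0"
    unfolding switch_def by auto
  then have "card e0 = 2" "e0 \<subseteq> {0..<n}"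
    using assms(1) unfolding perfect_matching_def by auto
  then show "card e = 2" "e \<subseteq> {0..<n}"
    using e0(2) assms(2,3) by (simp_all add: card_image) (auto simp: transpose_def)
next
  fix v assume v: "v \<in> {0..<n}"
  have "degree (switch a b I) v = size (filter_mset (\<lambda>e. Transposition.transpose a b v \<in> e) I)"
    unfolding degree_def switch_def filter_mset_image_mset by (simp add: in_transpose_image_iff)
  also have "\<dots> = degree I (Transposition.transpose a b v)"
    by (simp add: degree_def)
  also have "\<dots> = 1"
    using assms v unfolding perfect_matching_def by (auto simp: transpose_def)
  finally show "degree (switch a b I) v = 1" .
qed

definition imbalance :: "nat \<Rightarrow> nat \<Rightarrow> mgraph \<Rightarrow> nat \<Rightarrow> int" where
  "imbalance a b X z =
     (if z \<noteq> a \<and> z \<noteq> b then int (count X {a, z}) - int (count X {b, z}) else 0)"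

lemma imbalance_empty [simp]: "imbalance a b {#} = (\<lambda>x. 0)"
  by (simp add: imbalance_def fun_eq_iff)

lemma imbalance_add: "imbalance a b (X + Y) z = imbalance a b X z + imbalance a b Y z"
  by (simp add: imbalance_def)

lemma imbalance_sum: "imbalance a b (\<Sum>i\<in>U. X i) z = (\<Sum>i\<in>U. imbalance a b (X i) z)"
  by (simp add: imbalance_def count_sum of_nat_sum sum_subtractf)

lemma imbalance_swap: "imbalance b a X z = - imbalance a b X z"
  by (simp add: imbalance_def)

lemma imbalance_eqI:
  assumes "\<And>z. z \<noteq> a \<Longrightarrow> z \<noteq> b \<Longrightarrow> int (count X {a, z}) - int (count X {b, z}) = h z"
    and "h a = 0" "h b = 0"
  shows "imbalance a b X = h"
  using assms by (auto simp: imbalance_def)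

lemma imbalance_complete_multigraph:
  "a < n \<Longrightarrow> b < n \<Longrightarrow> imbalance a b (complete_multigraph lam n) z = 0"
  by (cases "z < n")
    (simp_all add: imbalance_def count_complete_multigraph_edge count_complete_multigraph_outside)

text \<open>The change of edge multiplicities caused by moving, for each vertex \<open>z\<close>, \<open>h z\<close> edges
  from \<open>{a, z}\<close> to \<open>{b, z}\<close>.\<close>

definition edge_shift :: "nat \<Rightarrow> nat \<Rightarrow> nat \<Rightarrow> (nat \<Rightarrow> int) \<Rightarrow> nat set \<Rightarrow> int" where
  "edge_shift n a b h e =
     (\<Sum>z\<in>{0..<n} - {a, b}. h z * (of_bool (e = {b, z}) - of_bool (e = {a, z})))"

lemma edge_shift_add:
  "edge_shift n a b (\<lambda>x. h1 x + h2 x) e = edge_shift n a b h1 e + edge_shift n a b h2 e"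
  unfolding edge_shift_def sum.distrib[symmetric] by (rule sum.cong) (simp_all add: algebra_simps)

lemma edge_shift_sum:
  "edge_shift n a b (\<lambda>x. \<Sum>i\<in>U. h i x) e = (\<Sum>i\<in>U. edge_shift n a b (h i) e)"
  unfolding edge_shift_def by (simp add: sum_distrib_right) (rule sum.swap)

lemma edge_shift_first:
  assumes "z \<in> {0..<n} - {a, b}" "a \<noteq> b"
  shows "edge_shift n a b h {a, z} = - h z"
proof -
  have "edge_shift n a b h {a, z} = (\<Sum>z'\<in>{0..<n} - {a, b}. if z' = z then - h z else 0)"
    unfolding edge_shift_def by (rule sum.cong) (use assms in \<open>auto simp: doubleton_eq_iff\<close>)
  then show ?thesis using assms by simp
qed

lemma edge_shift_second:
  assumes "z \<in> {0..<n} - {a, b}" "a \<noteq> b"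
  shows "edge_shift n a b h {b, z} = h z"
proof -
  have "edge_shift n a b h {b, z} = (\<Sum>z'\<in>{0..<n} - {a, b}. if z' = z then h z else 0)"
    unfolding edge_shift_def by (rule sum.cong) (use assms in \<open>auto simp: doubleton_eq_iff\<close>)
  then show ?thesis using assms by simp
qed

lemma edge_shift_other:
  "\<forall>z\<in>{0..<n} - {a, b}. e \<noteq> {a, z} \<and> e \<noteq> {b, z} \<Longrightarrow> edge_shift n a b h e = 0"
  unfolding edge_shift_def by (intro sum.neutral) auto

lemma edge_shift_two:
  assumes "z0 \<in> {0..<n} - {a, b}" "z1 \<in> {0..<n} - {a, b}"
  shows "edge_shift n a b (\<lambda>x. s * indicator {z0} x + s1 * indicator {z1} x) e
     = s * (of_bool (e = {b, z0}) - of_bool (e = {a, z0}))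
       + s1 * (of_bool (e = {b, z1}) - of_bool (e = {a, z1}))"
proof -
  have "edge_shift n a b (\<lambda>x. c * indicator {z} x) e = c * (of_bool (e = {b, z}) - of_bool (e = {a, z}))"
    if "z \<in> {0..<n} - {a, b}" for c z
  proof -
    have "edge_shift n a b (\<lambda>x. c * indicator {z} x) e
        = (\<Sum>z'\<in>{0..<n} - {a, b}. if z' = z then c * (of_bool (e = {b, z}) - of_bool (e = {a, z})) else 0)"
      unfolding edge_shift_def by (rule sum.cong) (auto simp: indicator_def)
    then show ?thesis using that by simp
  qed
  then show ?thesis using assms edge_shift_add by simp
qed

lemma transpose_image_edge:
  fixes e :: "nat set"
  assumes e: "e = {i, j}" "i \<noteq> j" "i < n" "j < n"
    and shift: "\<forall>z\<in>{0..<n} - {a, b}. e \<noteq> {a, z} \<and> e \<noteq> {b, z}"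
  shows "Transposition.transpose a b ` e = e"
proof (rule transpose_image_eq)
  have other: "w \<in> e" if "v \<in> e" "v \<in> {a, b}" "w \<in> {a, b}" for v w
  proof -
    obtain z where z: "e = {v, z}" "z \<noteq> v" "z < n"
      using e \<open>v \<in> e\<close> by (metis empty_iff insert_commute insert_iff)
    show "w \<in> e"
    proof (cases "z \<in> {a, b}")
      case False
      then have "z \<in> {0..<n} - {a, b}" using z by auto
      then show ?thesis using shift z(1) \<open>v \<in> {a, b}\<close> by blast
    qed (use z that in auto)
  qed
  show "a \<in> e \<longleftrightarrow> b \<in> e" using other by blast
qed

lemma count_switch_edge_shift:
  assumes ab: "a \<noteq> b"
    and X: "\<forall>e\<in>#X. \<exists>i j. i < n \<and> j < n \<and> i \<noteq> j \<and> e = {i, j}"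
  shows "int (count (switch a b X) e) = int (count X e) + edge_shift n a b (imbalance a b X) e"
proof (cases "\<exists>z\<in>{0..<n} - {a, b}. e = {a, z} \<or> e = {b, z}")
  case True
  then obtain z where z: "z \<in> {0..<n} - {a, b}" and "e = {a, z} \<or> e = {b, z}" by blast
  then consider "e = {a, z}" | "e = {b, z}" by blast
  then show ?thesis
  proof cases
    case 1
    with z show ?thesis by (simp add: count_switch edge_shift_first[OF z ab] imbalance_def)
  next
    case 2
    with z show ?thesis by (simp add: count_switch edge_shift_second[OF z ab] imbalance_def)
  qed
next
  case False
  let ?\<tau> = "image (Transposition.transpose a b)"
  have fixed: "?\<tau> e' = e'"
    if "e' \<in># X" "\<forall>z\<in>{0..<n} - {a, b}. e' \<noteq> {a, z} \<and> e' \<noteq> {b, z}" for e'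
    using X that transpose_image_edge[of e' _ _ n a b] by metis
  have "?\<tau> e = e" if "e \<in># X"
    using fixed[OF that] False by blast
  moreover have "?\<tau> e = e" if "?\<tau> e \<in># X"
  proof -
    have invol: "e = ?\<tau> (?\<tau> e)" by (simp add: image_image)
    have "\<forall>z\<in>{0..<n} - {a, b}. ?\<tau> e \<noteq> {a, z} \<and> ?\<tau> e \<noteq> {b, z}"
    proof (intro ballI conjI notI)
      fix z assume z: "z \<in> {0..<n} - {a, b}"
      show False if "?\<tau> e = {a, z}"
        using invol that z False by auto
      show False if "?\<tau> e = {b, z}"
        using invol that z False by auto
    qed
    then have "?\<tau> (?\<tau> e) = ?\<tau> e" by (rule fixed[OF that])
    then show ?thesis by (simp add: image_image)
  qed
  ultimately have "count X (?\<tau> e) = count X e"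
    by (metis count_eq_zero_iff)
  then show ?thesis using False edge_shift_other by (auto simp: count_switch)
qed

section \<open>Signed pairs of unit vectors\<close>

text \<open>Signed pairs \<open>s e\<^sub>z + t e\<^sub>w\<close> of unit vectors; with \<open>w = z\<close> and \<open>t = -s\<close> this includes 0.\<close>

definition signed_pair :: "(nat \<Rightarrow> int) \<Rightarrow> bool" where
  "signed_pair v \<longleftrightarrow> (\<exists>z w s t. s \<in> {1, -1} \<and> t \<in> {1, -1} \<and>
     v = (\<lambda>x. s * indicator {z} x + t * indicator {w} x))"

lemma signed_pairI:
  "s \<in> {1, -1} \<Longrightarrow> t \<in> {1, -1} \<Longrightarrow> signed_pair (\<lambda>x. s * indicator {z} x + t * indicator {w} x)"
  unfolding signed_pair_def by blast

lemma signed_pair_zero: "signed_pair (\<lambda>x. 0)"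
  using signed_pairI[of 1 "-1" 0 0] by simp

lemma signed_pair_uminus:
  assumes "signed_pair v"
  shows "signed_pair (\<lambda>x. - v x)"
proof -
  obtain z w s t where "s \<in> {1, -1}" "t \<in> {1, -1}"
    "v = (\<lambda>x. s * indicator {z} x + t * indicator {w} x)"
    using assms unfolding signed_pair_def by blast
  then show ?thesis using signed_pairI[of "- s" "- t" z w] by auto
qed

lemma signed_pair_through:
  assumes "signed_pair v" "s \<in> {1, -1}" "s * v z > 0"
  obtains w t where "t \<in> {1, -1}" "v = (\<lambda>x. s * indicator {z} x + t * indicator {w} x)"
proof -
  obtain z' w' s' t' where v: "s' \<in> {1, -1}" "t' \<in> {1, -1}"
    "v = (\<lambda>x. s' * indicator {z'} x + t' * indicator {w'} x)"
    using assms(1) unfolding signed_pair_def by blast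
  show ?thesis
  proof (cases "z' = z \<and> s' = s")
    case True
    then show ?thesis using that v by blast
  next
    case F1: False
    show ?thesis
    proof (cases "w' = z \<and> t' = s")
      case True
      then have "v = (\<lambda>x. s * indicator {z} x + s' * indicator {z'} x)"
        using v(3) by (auto simp: algebra_simps)
      then show ?thesis using that v(1) by blast
    next
      case F2: False
      have "s * v z \<le> 0"
        using F1 F2 v assms(2) by (auto simp: indicator_def)
      then show ?thesis using assms(3) by simp
    qed
  qed
qed

lemma signed_pairs_merge:
  assumes V: "\<forall>v\<in>#V. signed_pair v" and v12: "v1 \<in># V" "v2 \<in># V - {#v1#}"
    and z: "v1 z > 0" "v2 z < 0"
  obtains V' where "size V' < size V" "\<forall>v\<in>#V'. signed_pair v"
    "\<And>x. (\<Sum>v\<in>#V'. v x) = (\<Sum>v\<in>#V. v x)"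
    "\<And>W'. W' \<subseteq># V' \<Longrightarrow> \<exists>W. W \<subseteq># V \<and> (\<forall>x. (\<Sum>w\<in>#W. w x) = (\<Sum>w\<in>#W'. w x))"
proof
  have sp: "signed_pair v1" "signed_pair v2" "1 * v1 z > 0" "(-1) * v2 z > 0"
    using V v12 z by (auto dest: in_diffD)
  obtain w t where w: "t \<in> {1, -1}" "v1 = (\<lambda>x. 1 * indicator {z} x + t * indicator {w} x)"
    using signed_pair_through[OF sp(1) _ sp(3)] by blast
  obtain u r where u: "r \<in> {1, -1}" "v2 = (\<lambda>x. (-1) * indicator {z} x + r * indicator {u} x)"
    using signed_pair_through[OF sp(2) _ sp(4)] by blast
  define m where "m = (\<lambda>x. v1 x + v2 x)"
  define V' where "V' = add_mset m (V - {#v1, v2#})"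
  have sub: "{#v1, v2#} \<subseteq># V"
    using v12 by (simp add: insert_subset_eq_iff)
  then have V_eq: "V = (V - {#v1, v2#}) + {#v1, v2#}" by (rule subset_mset.diff_add[symmetric])
  show "size V' < size V"
    using size_mset_mono[OF sub] sub by (simp add: V'_def size_Diff_submset)
  have "signed_pair m"
    using signed_pairI[OF w(1) u(1), of w u] w u by (simp add: m_def)
  then show "\<forall>v\<in>#V'. signed_pair v"
    using V by (auto simp: V'_def dest: in_diffD)
  show "(\<Sum>v\<in>#V'. v x) = (\<Sum>v\<in>#V. v x)" for x
  proof -
    have "(\<Sum>v\<in>#V. v x) = (\<Sum>v\<in>#(V - {#v1, v2#}) + {#v1, v2#}. v x)"
      using V_eq by (rule arg_cong)
    then show ?thesis by (simp add: V'_def m_def)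
  qed
  fix W' assume W': "W' \<subseteq># V'"
  show "\<exists>W. W \<subseteq># V \<and> (\<forall>x. (\<Sum>w\<in>#W. w x) = (\<Sum>w\<in>#W'. w x))"
  proof (cases "m \<in># W'")
    case True
    have "W' - {#m#} \<subseteq># V - {#v1, v2#}"
      using W' by (simp add: V'_def subset_eq_diff_conv)
    then have "W' - {#m#} + {#v1, v2#} \<subseteq># V"
      using V_eq subset_mset.add_right_mono by metis
    moreover have "(\<Sum>w\<in>#W' - {#m#} + {#v1, v2#}. w x) = (\<Sum>w\<in>#W'. w x)" for x
    proof -
      have "(\<Sum>w\<in>#W'. w x) = (\<Sum>w\<in>#add_mset m (W' - {#m#}). w x)"
        using True by (simp add: insert_DiffM)
      then show ?thesis by (simp add: m_def)
    qed
    ultimately show ?thesis by blast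
  next
    case False
    have "W' - {#m#} \<subseteq># V - {#v1, v2#}"
      using W' by (simp add: V'_def subset_eq_diff_conv)
    then have "W' \<subseteq># V - {#v1, v2#}"
      using False by (simp add: diff_single_trivial)
    then have "W' \<subseteq># V" by (meson subset_mset.order_trans diff_subset_eq_self)
    then show ?thesis by blast
  qed
qed

lemma signed_pairs_subsum_uncancelled:
  assumes V: "\<forall>v\<in>#V. signed_pair v" and s: "s \<in> {1, -1}" "s * (\<Sum>v\<in>#V. v z0) > 0"
    and no_cancel: "\<And>v1 v2 z. v1 \<in># V \<Longrightarrow> v2 \<in># V - {#v1#} \<Longrightarrow> v1 z > 0 \<Longrightarrow> v2 z < 0 \<Longrightarrow> False"
  shows "\<exists>W z1 s1. W \<subseteq># V \<and> s1 \<in> {1, -1}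
     \<and> (\<forall>x. (\<Sum>w\<in>#W. w x) = s * indicator {z0} x + s1 * indicator {z1} x)
     \<and> s1 * (\<Sum>v\<in>#V. v z1) > 0 \<and> (z1 = z0 \<longrightarrow> s1 = s \<and> s * (\<Sum>v\<in>#V. v z0) \<ge> 2)"
proof -
  obtain v where v: "v \<in># V" "s * v z0 > 0"
  proof (rule ccontr)
    assume "\<not> thesis"
    then have "(\<Sum>v\<in>#V. s * v z0) \<le> (\<Sum>v\<in>#V. 0)"
      using that by (intro sum_mset_mono) force
    with s(2) show False by (simp add: sum_mset_distrib_left)
  qed
  obtain z1 t where zt: "t \<in> {1, -1}" "v = (\<lambda>x. s * indicator {z0} x + t * indicator {z1} x)"
    using signed_pair_through[of v s z0] V s v by blast
  define V0 where "V0 = V - {#v#}"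
  have V_eq: "V = add_mset v V0" using v(1) by (simp add: V0_def)
  have tv: "t * v z1 > 0"
    using zt s v(2) by (auto simp: indicator_def split: if_splits)
  have "t * u z1 \<ge> 0" if "u \<in># V0" for u
  proof (rule ccontr)
    assume neg: "\<not> t * u z1 \<ge> 0"
    have "u \<in># V" using that by (simp add: V0_def) (meson in_diffD)
    moreover have "V - {#u#} = add_mset v (V0 - {#u#})"
      using V_eq that by (simp add: diff_add_mset_swap insert_DiffM2)
    then have "v \<in># V - {#u#}" by simp
    moreover have "u \<in># V - {#v#}" using that by (simp add: V0_def)
    ultimately show False
      using zt(1) tv neg v(1) no_cancel[of v u z1] no_cancel[of u v z1] by auto
  qed
  then have "(\<Sum>u\<in>#V0. 0) \<le> (\<Sum>u\<in>#V0. t * u z1)"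
    by (intro sum_mset_mono)
  then have rest: "t * (\<Sum>u\<in>#V0. u z1) \<ge> 0"
    by (simp add: sum_mset_distrib_left)
  have "t * (\<Sum>u\<in>#V. u z1) > 0"
    using tv rest V_eq by (simp add: algebra_simps)
  moreover have "t = s \<and> s * (\<Sum>u\<in>#V. u z0) \<ge> 2" if "z1 = z0"
  proof -
    have "t = s" "s * v z0 = 2"
      using zt s v(2) that by (auto simp: indicator_def)
    then show ?thesis using rest V_eq that by (simp add: algebra_simps)
  qed
  moreover have "{#v#} \<subseteq># V" using v(1) by simp
  moreover have "\<forall>x. (\<Sum>w\<in>#{#v#}. w x) = s * indicator {z0} x + t * indicator {z1} x"
    using zt(2) by simp
  ultimately show ?thesis using zt(1) by blast
qed

text \<open>Merge pairs cancelling at a common vertex until there is no cancellation left; then any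
  pair through \<open>z\<^sub>0\<close> with the sign \<open>s\<close> there is a subfamily as required.\<close>

lemma signed_pairs_subsum:
  assumes "\<forall>v\<in>#V. signed_pair v" "s \<in> {1, -1}" "s * (\<Sum>v\<in>#V. v z0) > 0"
  shows "\<exists>W z1 s1. W \<subseteq># V \<and> s1 \<in> {1, -1}
     \<and> (\<forall>x. (\<Sum>w\<in>#W. w x) = s * indicator {z0} x + s1 * indicator {z1} x)
     \<and> s1 * (\<Sum>v\<in>#V. v z1) > 0 \<and> (z1 = z0 \<longrightarrow> s1 = s \<and> s * (\<Sum>v\<in>#V. v z0) \<ge> 2)"
  using assms
proof (induction "size V" arbitrary: V rule: less_induct)
  case less
  show ?case
  proof (cases "\<exists>v1\<in>#V. \<exists>v2\<in>#V - {#v1#}. \<exists>z. v1 z > 0 \<and> v2 z < 0")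
    case True
    then obtain v1 v2 z where "v1 \<in># V" "v2 \<in># V - {#v1#}" "v1 z > 0" "v2 z < 0" by blast
    then obtain V' where V': "size V' < size V" "\<forall>v\<in>#V'. signed_pair v"
      "\<And>x. (\<Sum>v\<in>#V'. v x) = (\<Sum>v\<in>#V. v x)"
      "\<And>W'. W' \<subseteq># V' \<Longrightarrow> \<exists>W. W \<subseteq># V \<and> (\<forall>x. (\<Sum>w\<in>#W. w x) = (\<Sum>w\<in>#W'. w x))"
      using signed_pairs_merge less.prems(1) by metis
    from less.hyps[OF V'(1,2) less.prems(2)] less.prems(3) V'(3)
    obtain W' z1 s1 where "W' \<subseteq># V'" "s1 \<in> {1, -1}"
      "\<forall>x. (\<Sum>w\<in>#W'. w x) = s * indicator {z0} x + s1 * indicator {z1} x"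
      "s1 * (\<Sum>v\<in>#V. v z1) > 0" "z1 = z0 \<longrightarrow> s1 = s \<and> s * (\<Sum>v\<in>#V. v z0) \<ge> 2"
      by auto
    with V'(4) show ?thesis by metis
  next
    case False
    then have "\<And>v1 v2 z. v1 \<in># V \<Longrightarrow> v2 \<in># V - {#v1#} \<Longrightarrow> v1 z > 0 \<Longrightarrow> v2 z < 0 \<Longrightarrow> False"
      by blast
    from signed_pairs_subsum_uncancelled[OF less.prems this] show ?thesis .
  qed
qed

section \<open>The switching lemma for cycle packings\<close>

definition partial_switch :: "nat \<Rightarrow> nat \<Rightarrow> (nat \<Rightarrow> bool) \<Rightarrow> mgraph list \<Rightarrow> mgraph" where
  "partial_switch a b F Ps = (\<Sum>i = 0..<length Ps. if F i then switch a b (Ps ! i) else Ps ! i)"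

text \<open>The pieces will be the whole cycle, or the two paths between \<open>a\<close> and \<open>b\<close> if the cycle
  passes through both; switching a path between \<open>a\<close> and \<open>b\<close> just reverses it.\<close>

definition switch_pieces :: "nat \<Rightarrow> nat \<Rightarrow> nat list \<Rightarrow> mgraph list \<Rightarrow> bool" where
  "switch_pieces a b vs Ps \<longleftrightarrow> cycle_edges vs = sum_list Ps
     \<and> (\<forall>X\<in>set Ps. signed_pair (imbalance a b X))
     \<and> (\<forall>F. \<exists>ws. is_cycle (length vs) ws \<and> cycle_edges ws = partial_switch a b F Ps)"

lemma imbalance_cycle_edges_through_first:
  assumes "distinct (a # A)" "A \<noteq> []" "b \<notin> set (a # A)"
  shows "imbalance a b (cycle_edges (a # A)) = (\<lambda>x. indicator {hd A} x + indicator {last A} x)"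
proof (rule imbalance_eqI)
  fix z assume "z \<noteq> a" "z \<noteq> b"
  then show "int (count (cycle_edges (a # A)) {a, z}) - int (count (cycle_edges (a # A)) {b, z})
      = indicator {hd A} z + indicator {last A} z"
    using assms count_cycle_edges_Cons[of a A z] count_cycle_edges_notin[of b "a # A" z]
    by (auto simp: indicator_def)
next
  have "hd A \<in> set A" "last A \<in> set A" using assms(2) by simp_all
  then show "indicator {hd A} a + indicator {last A} a = (0::int)"
    and "indicator {hd A} b + indicator {last A} b = (0::int)"
    using assms by (auto simp: indicator_def)
qed

lemma signed_pair_imbalance_cycle_edges_through:
  assumes "is_cycle (length vs) vs" "a \<in> set vs" "b \<notin> set vs"
  shows "signed_pair (imbalance a b (cycle_edges vs))"
proof -
  obtain A where A: "cycle_edges vs = cycle_edges (a # A)" "mset (a # A) = mset vs"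
    using cycle_edges_rotate_to[OF assms(2)] .
  have "distinct (a # A)"
    using mset_eq_imp_distinct_iff[OF A(2)] assms(1) by (simp add: is_cycle_def)
  moreover have "A \<noteq> []"
    using mset_eq_length[OF A(2)] assms(1) by (auto simp: is_cycle_def)
  moreover have "b \<notin> set (a # A)"
    using mset_eq_setD[OF A(2)] assms(3) by simp
  ultimately show ?thesis
    using A(1) imbalance_cycle_edges_through_first signed_pairI[of 1 1] by simp
qed

lemma signed_pair_imbalance_cycle_edges:
  assumes "is_cycle (length vs) vs" "\<not> (a \<in> set vs \<and> b \<in> set vs)"
  shows "signed_pair (imbalance a b (cycle_edges vs))"
proof -
  consider "a \<in> set vs" "b \<notin> set vs" | "b \<in> set vs" "a \<notin> set vs" | "a \<notin> set vs" "b \<notin> set vs"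
    using assms(2) by blast
  then show ?thesis
  proof cases
    case 2
    then have "signed_pair (\<lambda>x. - imbalance b a (cycle_edges vs) x)"
      using signed_pair_imbalance_cycle_edges_through[OF assms(1)] signed_pair_uminus by blast
    then show ?thesis by (simp add: imbalance_swap[of b a])
  next
    case 3
    then have "imbalance a b (cycle_edges vs) = (\<lambda>x. 0)"
      by (intro imbalance_eqI) (simp_all add: count_cycle_edges_notin)
    then show ?thesis using signed_pair_zero by simp
  qed (use signed_pair_imbalance_cycle_edges_through[OF assms(1)] in blast)
qed

lemma signed_pair_imbalance_path_edges:
  assumes "distinct (a # A @ [b])"
  shows "signed_pair (imbalance a b (path_edges (a # A @ [b])))"
proof (cases "A = []")
  case True
  then have "imbalance a b (path_edges (a # A @ [b])) = (\<lambda>x. 0)"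
    by (intro imbalance_eqI) (simp_all add: doubleton_eq_iff)
  then show ?thesis using signed_pair_zero by simp
next
  case False
  have "imbalance a b (path_edges (a # A @ [b])) = (\<lambda>x. 1 * indicator {hd A} x + (-1) * indicator {last A} x)"
  proof (rule imbalance_eqI)
    fix z assume "z \<noteq> a" "z \<noteq> b"
    then show "int (count (path_edges (a # A @ [b])) {a, z}) - int (count (path_edges (a # A @ [b])) {b, z})
        = 1 * indicator {hd A} z + (-1) * indicator {last A} z"
      using assms False count_path_edges_Cons[of a "A @ [b]" z] count_path_edges_snoc[of b "a # A" z]
      by (simp add: indicator_def)
  next
    have "hd A \<in> set A" "last A \<in> set A" using False by simp_all
    then show "1 * indicator {hd A} a + (-1) * indicator {last A} a = (0::int)"
      and "1 * indicator {hd A} b + (-1) * indicator {last A} b = (0::int)"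
      using assms by (auto simp: indicator_def)
  qed
  then show ?thesis using signed_pairI[of 1 "-1"] by simp
qed

lemma switch_path_edges_between:
  assumes "distinct (a # A @ [b])"
  shows "switch a b (path_edges (a # A @ [b])) = path_edges (a # rev A @ [b])"
proof -
  have "map (Transposition.transpose a b) A = A"
    using assms by (intro map_idI) (auto simp: transpose_def)
  then have "switch a b (path_edges (a # A @ [b])) = path_edges (rev (a # rev A @ [b]))"
    by (simp add: switch_path_edges)
  then show ?thesis by (simp only: path_edges_rev)
qed

lemma switch_pieces_single:
  assumes "is_cycle (length vs) vs" "signed_pair (imbalance a b (cycle_edges vs))"
  shows "switch_pieces a b vs [cycle_edges vs]"
  unfolding switch_pieces_def
proof (intro conjI allI)
  fix F
  have "is_cycle (length vs) (map (Transposition.transpose a b) vs)"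
    using assms(1) by (simp add: is_cycle_def distinct_map)
  then show "\<exists>ws. is_cycle (length vs) ws \<and> cycle_edges ws = partial_switch a b F [cycle_edges vs]"
    using assms(1) by (cases "F 0") (auto simp: partial_switch_def switch_cycle_edges)
qed (use assms in simp_all)

lemma switch_pieces_exist:
  assumes "is_cycle (length vs) vs"
  shows "\<exists>Ps. switch_pieces a b vs Ps"
proof (cases "a \<in> set vs \<and> b \<in> set vs \<and> a \<noteq> b")
  case False
  then have "signed_pair (imbalance a b (cycle_edges vs))"
  proof (cases "a = b")
    case True
    then have "imbalance a b (cycle_edges vs) = (\<lambda>x. 0)"
      by (intro imbalance_eqI) simp_all
    then show ?thesis using signed_pair_zero by simp
  qed (use assms signed_pair_imbalance_cycle_edges in blast)
  then show ?thesis using switch_pieces_single assms by blast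
next
  case True
  obtain A where A: "cycle_edges vs = cycle_edges (a # A)" "mset (a # A) = mset vs"
    using cycle_edges_rotate_to True by blast
  have "b \<in> set (a # A)" using True mset_eq_setD[OF A(2)] by simp
  then have "b \<in> set A" using True by simp
  then obtain A1 A2 where A12: "A = A1 @ b # A2" by (meson split_list)
  have d: "distinct (a # A1 @ b # A2)"
    using mset_eq_imp_distinct_iff[OF A(2)] assms A12 by (simp add: is_cycle_def)
  have len: "length (a # A1 @ b # A2) = length vs"
    using mset_eq_length[OF A(2)] A12 by simp
  let ?P = "\<lambda>B. path_edges (a # B @ [b])"
  have d1: "distinct (a # A1 @ [b])" and d2: "distinct (a # rev A2 @ [b])" using d by auto
  have half: "path_edges (b # B @ [a]) = ?P (rev B)" for B
    using path_edges_rev[of "b # B @ [a]"] by simp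
  have split: "cycle_edges (a # B1 @ b # B2) = ?P B1 + ?P (rev B2)" for B1 B2
    using cycle_edges_split[of a B1 b B2] half by simp
  have "switch_pieces a b vs [?P A1, ?P (rev A2)]"
    unfolding switch_pieces_def
  proof (intro conjI allI)
    fix F :: "nat \<Rightarrow> bool"
    let ?ws = "a # (if F 0 then rev A1 else A1) @ b # (if F 1 then rev A2 else A2)"
    have "is_cycle (length vs) ?ws" "cycle_edges ?ws = partial_switch a b F [?P A1, ?P (rev A2)]"
      using d len assms switch_path_edges_between[OF d1] switch_path_edges_between[OF d2]
      by (auto simp: is_cycle_def split partial_switch_def numeral_2_eq_2)
    then show "\<exists>ws. is_cycle (length vs) ws \<and> cycle_edges ws = partial_switch a b F [?P A1, ?P (rev A2)]"
      by blast
  qed (use A(1) A12 split signed_pair_imbalance_path_edges d1 d2 in auto)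
  then show ?thesis by blast
qed

lemma perfect_matching_partner:
  assumes "perfect_matching V I" "v \<in> V"
  obtains w where "w \<noteq> v" "w \<in> V" "\<And>z. z \<noteq> v \<Longrightarrow> count I {v, z} = of_bool (z = w)"
proof -
  obtain e where e: "filter_mset (\<lambda>e. v \<in> e) I = {#e#}"
    using assms size_1_singleton_mset unfolding perfect_matching_def degree_def by metis
  then have "e \<in># filter_mset (\<lambda>e. v \<in> e) I" by simp
  then have "e \<in># I" "v \<in> e" by simp_all
  moreover have "card e = 2" "e \<subseteq> V"
    using \<open>e \<in># I\<close> assms(1) unfolding perfect_matching_def by auto
  ultimately obtain w where w: "e = {v, w}" "w \<noteq> v" "w \<in> V"
    by (auto simp: card_2_iff insert_commute)
  have "count I {v, z} = of_bool (z = w)" if "z \<noteq> v" for z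
  proof -
    have "count I {v, z} = count (filter_mset (\<lambda>e. v \<in> e) I) {v, z}" by simp
    then show ?thesis using e w that by (auto simp: doubleton_eq_iff)
  qed
  then show ?thesis using that w by blast
qed

lemma signed_pair_imbalance_perfect_matching:
  assumes "perfect_matching {0..<n} I" "a < n" "b < n" "a \<noteq> b"
  shows "signed_pair (imbalance a b I)"
proof -
  obtain w where w: "w \<noteq> a" "w < n" "\<And>z. z \<noteq> a \<Longrightarrow> count I {a, z} = of_bool (z = w)"
    using perfect_matching_partner[OF assms(1), of a] assms(2) by auto
  obtain w' where w': "w' \<noteq> b" "w' < n" "\<And>z. z \<noteq> b \<Longrightarrow> count I {b, z} = of_bool (z = w')"
    using perfect_matching_partner[OF assms(1), of b] assms(3) by auto
  have partners: "w = b \<longleftrightarrow> w' = a"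
  proof
    assume "w = b"
    then have "count I {b, a} = 1" using w(3)[of b] assms(4) by (simp add: insert_commute)
    then show "w' = a" using w'(3)[of a] assms(4) by (cases "a = w'") auto
  next
    assume "w' = a"
    then have "count I {a, b} = 1" using w'(3)[of a] assms(4) by (simp add: insert_commute)
    then show "w = b" using w(3)[of b] assms(4) by (cases "b = w") auto
  qed
  show ?thesis
  proof (cases "w = b")
    case True
    then have "imbalance a b I = (\<lambda>x. 0)"
      using w w' partners by (intro imbalance_eqI) auto
    then show ?thesis using signed_pair_zero by simp
  next
    case False
    then have "imbalance a b I = (\<lambda>x. 1 * indicator {w} x + (-1) * indicator {w'} x)"
      using w w' partners by (intro imbalance_eqI) (auto simp: indicator_def)
    then show ?thesis using signed_pairI[of 1 "-1"] by simp
  qed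
qed

lemma subseteq_image_mset_set:
  assumes "finite A" "W \<subseteq># image_mset g (mset_set A)"
  shows "\<exists>S\<subseteq>A. W = image_mset g (mset_set S)"
  using assms
proof (induction A arbitrary: W rule: finite_induct)
  case (insert x A)
  have image: "image_mset g (mset_set (insert x A)) = add_mset (g x) (image_mset g (mset_set A))"
    using insert.hyps by simp
  have "W - {#g x#} \<subseteq># image_mset g (mset_set A)"
    using insert.prems by (simp add: image subset_eq_diff_conv)
  then obtain S where S: "S \<subseteq> A" "W - {#g x#} = image_mset g (mset_set S)"
    using insert.IH by blast
  show ?case
  proof (cases "g x \<in># W")
    case True
    have "finite S" "x \<notin> S" using S(1) insert.hyps finite_subset by auto
    have "W = add_mset (g x) (W - {#g x#})" using True by simp
    also have "\<dots> = image_mset g (mset_set (insert x S))"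
      using S(2) \<open>finite S\<close> \<open>x \<notin> S\<close> by simp
    finally show ?thesis using S(1) by blast
  next
    case False
    then have "W - {#g x#} = W" by (rule diff_single_trivial)
    with S(2) have "W = image_mset g (mset_set S)" by simp
    then show ?thesis using S(1) by blast
  qed
qed simp

lemma switch_subfamily:
  fixes P :: "'u \<Rightarrow> mgraph"
  assumes U: "finite U" and P: "\<forall>u\<in>U. signed_pair (imbalance a b (P u))"
    "\<forall>u\<in>U. \<forall>e\<in>#P u. \<exists>i j. i < n \<and> j < n \<and> i \<noteq> j \<and> e = {i, j}"
    and ab: "a \<noteq> b" and s: "s \<in> {1, -1}" "s * imbalance a b (\<Sum>u\<in>U. P u) z0 > 0"
  shows "\<exists>S z1 s1. s1 \<in> {1, -1} \<and> s1 * imbalance a b (\<Sum>u\<in>U. P u) z1 > 0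
    \<and> (z1 = z0 \<longrightarrow> s1 = s \<and> s * imbalance a b (\<Sum>u\<in>U. P u) z0 \<ge> 2)
    \<and> (\<forall>e. int (count (\<Sum>u\<in>U. if u \<in> S then switch a b (P u) else P u) e)
       = int (count (\<Sum>u\<in>U. P u) e) + edge_shift n a b (\<lambda>x. s * indicator {z0} x + s1 * indicator {z1} x) e)"
proof -
  let ?h = "\<lambda>u. imbalance a b (P u)"
  have sum_image: "(\<Sum>v\<in>#image_mset ?h (mset_set S). v x) = (\<Sum>u\<in>S. ?h u x)" for S x
    by (simp add: sum_unfold_sum_mset image_mset.compositionality comp_def)
  define V where "V = image_mset ?h (mset_set U)"
  have "\<forall>v\<in>#V. signed_pair v" using P(1) U by (auto simp: V_def)
  moreover have "s * (\<Sum>v\<in>#V. v z0) > 0" using s(2) by (simp add: V_def sum_image imbalance_sum)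
  ultimately have "\<exists>W z1 s1. W \<subseteq># V \<and> s1 \<in> {1, -1}
      \<and> (\<forall>x. (\<Sum>w\<in>#W. w x) = s * indicator {z0} x + s1 * indicator {z1} x)
      \<and> s1 * (\<Sum>v\<in>#V. v z1) > 0 \<and> (z1 = z0 \<longrightarrow> s1 = s \<and> s * (\<Sum>v\<in>#V. v z0) \<ge> 2)"
    by (rule signed_pairs_subsum[OF _ s(1)])
  then obtain W z1 s1 where W: "W \<subseteq># V" "s1 \<in> {1, -1}"
      "\<forall>x. (\<Sum>w\<in>#W. w x) = s * indicator {z0} x + s1 * indicator {z1} x"
      "s1 * (\<Sum>v\<in>#V. v z1) > 0" "z1 = z0 \<longrightarrow> s1 = s \<and> s * (\<Sum>v\<in>#V. v z0) \<ge> 2"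
    by blast
  obtain S where S: "S \<subseteq> U" "W = image_mset ?h (mset_set S)"
    using subseteq_image_mset_set[OF U W(1)[unfolded V_def]] by blast
  have "finite S" using S(1) U by (rule finite_subset)
  have "int (count (\<Sum>u\<in>U. if u \<in> S then switch a b (P u) else P u) e)
      = int (count (\<Sum>u\<in>U. P u) e) + edge_shift n a b (\<lambda>x. s * indicator {z0} x + s1 * indicator {z1} x) e" for e
  proof -
    have "int (count (\<Sum>u\<in>U. if u \<in> S then switch a b (P u) else P u) e)
        = (\<Sum>u\<in>U. int (count (P u) e) + (if u \<in> S then edge_shift n a b (?h u) e else 0))"
      unfolding count_sum of_nat_sum using count_switch_edge_shift[OF ab] P(2) by (intro sum.cong) auto
    also have "\<dots> = int (count (\<Sum>u\<in>U. P u) e) + (\<Sum>u\<in>S. edge_shift n a b (?h u) e)"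
      using S(1) U by (simp add: sum.distrib count_sum of_nat_sum sum.If_cases Int_absorb1)
    also have "(\<Sum>u\<in>S. edge_shift n a b (?h u) e) = edge_shift n a b (\<lambda>x. \<Sum>u\<in>S. ?h u x) e"
      by (rule edge_shift_sum[symmetric])
    also have "(\<lambda>x. \<Sum>u\<in>S. ?h u x) = (\<lambda>x. s * indicator {z0} x + s1 * indicator {z1} x)"
      using W(3) S(2) by (simp add: sum_image)
    finally show ?thesis .
  qed
  moreover have "s1 * imbalance a b (\<Sum>u\<in>U. P u) z1 > 0"
    "z1 = z0 \<longrightarrow> s1 = s \<and> s * imbalance a b (\<Sum>u\<in>U. P u) z0 \<ge> 2"
    using W(4,5) by (simp_all add: V_def sum_image imbalance_sum)
  ultimately show ?thesis
    using W(2) by (intro exI[of _ S] exI[of _ z1] exI[of _ s1]) blast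
qed

definition similar_packing :: "nat \<Rightarrow> nat list list \<Rightarrow> mgraph \<Rightarrow> nat list list \<Rightarrow> mgraph \<Rightarrow> bool" where
  "similar_packing n R I R' I' \<longleftrightarrow> map length R' = map length R \<and> (\<forall>G\<in>set R'. is_cycle (length G) G)
     \<and> (I = {#} \<longrightarrow> I' = {#}) \<and> (perfect_matching {0..<n} I \<longrightarrow> perfect_matching {0..<n} I')"

lemma similar_packing_refl: "\<forall>G\<in>set R. is_cycle (length G) G \<Longrightarrow> similar_packing n R I R I"
  by (simp add: similar_packing_def)

lemma similar_packing_trans:
  "similar_packing n R I R' I' \<Longrightarrow> similar_packing n R' I' R'' I'' \<Longrightarrow> similar_packing n R I R'' I''"
  by (simp add: similar_packing_def)

lemma similar_packing_valid:
  "similar_packing n R I R' I' \<Longrightarrow> I = {#} \<or> perfect_matching {0..<n} I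
     \<Longrightarrow> (\<forall>G\<in>set R'. is_cycle (length G) G) \<and> (I' = {#} \<or> perfect_matching {0..<n} I')"
  by (auto simp: similar_packing_def)

lemma sum_over_pieces:
  fixes Q :: "nat \<times> nat \<Rightarrow> 'a \<Rightarrow> 'b::comm_monoid_add"
  shows "(\<Sum>u\<in>insert (m, 0) (SIGMA k:{0..<m}. {0..<length (Ps k)}).
            Q u (if fst u < m then Ps (fst u) ! snd u else x))
     = (\<Sum>k = 0..<m. \<Sum>p = 0..<length (Ps k). Q (k, p) (Ps k ! p)) + Q (m, 0) x"
proof -
  let ?\<Sigma> = "SIGMA k:{0..<m}. {0..<length (Ps k)}"
  have "(\<Sum>u\<in>?\<Sigma>. Q u (if fst u < m then Ps (fst u) ! snd u else x)) = (\<Sum>(k, p)\<in>?\<Sigma>. Q (k, p) (Ps k ! p))"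
    by (rule sum.cong) auto
  also have "\<dots> = (\<Sum>k = 0..<m. \<Sum>p = 0..<length (Ps k). Q (k, p) (Ps k ! p))"
    by (rule sum.Sigma[symmetric]) auto
  finally show ?thesis by (simp add: add.commute)
qed

lemma similar_packing_switch:
  assumes "\<forall>k<length R. is_cycle (length (R ! k)) (ws k)" "a < n" "b < n"
  shows "similar_packing n R I (map ws [0..<length R]) (if c then switch a b I else I)"
  unfolding similar_packing_def
proof (intro conjI)
  show "map length (map ws [0..<length R]) = map length R"
    using assms(1) by (intro nth_equalityI) (auto simp: is_cycle_def)
  show "\<forall>G\<in>set (map ws [0..<length R]). is_cycle (length G) G"
    using assms(1) by (auto simp: is_cycle_def)
qed (use assms(2,3) perfect_matching_switch in auto)

lemma packing_switch:
  assumes R: "\<forall>G\<in>set R. is_cycle (length G) G" and I: "I = {#} \<or> perfect_matching {0..<n} I"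
    and edges: "\<forall>e\<in>#sum_list (map cycle_edges R) + I. \<exists>i j. i < n \<and> j < n \<and> i \<noteq> j \<and> e = {i, j}"
    and ab: "a \<noteq> b" "a < n" "b < n"
    and s: "s \<in> {1, -1}" "s * imbalance a b (sum_list (map cycle_edges R) + I) z0 > 0"
  shows "\<exists>R' I' z1 s1. similar_packing n R I R' I' \<and> s1 \<in> {1, -1}
    \<and> s1 * imbalance a b (sum_list (map cycle_edges R) + I) z1 > 0
    \<and> (z1 = z0 \<longrightarrow> s1 = s \<and> s * imbalance a b (sum_list (map cycle_edges R) + I) z0 \<ge> 2)
    \<and> (\<forall>e. int (count (sum_list (map cycle_edges R') + I') e)
       = int (count (sum_list (map cycle_edges R) + I) e)
         + edge_shift n a b (\<lambda>x. s * indicator {z0} x + s1 * indicator {z1} x) e)"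
proof -
  have "\<forall>k. \<exists>Ps. k < length R \<longrightarrow> switch_pieces a b (R ! k) Ps"
    using R switch_pieces_exist nth_mem by blast
  then obtain Ps where Ps: "\<And>k. k < length R \<Longrightarrow> switch_pieces a b (R ! k) (Ps k)"
    by metis
  define U where "U = insert (length R, 0) (SIGMA k:{0..<length R}. {0..<length (Ps k)})"
  define P where "P u = (if fst u < length R then Ps (fst u) ! snd u else I)" for u
  have "finite U" by (simp add: U_def)
  note sum_U = sum_over_pieces[of _ "length R" Ps I, folded U_def, unfolded P_def[symmetric]]
  have sum_list_R: "sum_list (map cycle_edges R) = (\<Sum>k = 0..<length R. sum_list (Ps k))"
    using Ps by (simp add: sum_list_sum_nth switch_pieces_def)
  have sum_P: "(\<Sum>u\<in>U. P u) = sum_list (map cycle_edges R) + I"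
    using sum_U[of "\<lambda>u X. X"] sum_list_R by (simp add: sum_list_sum_nth)
  have pieces: "\<forall>u\<in>U. signed_pair (imbalance a b (P u))"
  proof
    fix u assume "u \<in> U"
    show "signed_pair (imbalance a b (P u))"
    proof (cases "fst u < length R")
      case True
      then have "P u \<in> set (Ps (fst u))"
        using \<open>u \<in> U\<close> by (auto simp: U_def P_def)
      then show ?thesis using Ps[OF True] by (simp add: switch_pieces_def)
    next
      case False
      then have "P u = I" by (simp add: P_def)
      with I signed_pair_zero signed_pair_imbalance_perfect_matching[OF _ ab(2,3,1)] show ?thesis
        by auto
    qed
  qed
  have piece_edges: "\<forall>u\<in>U. \<forall>e\<in>#P u. \<exists>i j. i < n \<and> j < n \<and> i \<noteq> j \<and> e = {i, j}"
  proof (intro ballI)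
    fix u e assume "u \<in> U" "e \<in># P u"
    then have "count (P u) e \<le> count (\<Sum>u\<in>U. P u) e"
      unfolding count_sum using \<open>finite U\<close> by (intro member_le_sum) auto
    then have "e \<in># sum_list (map cycle_edges R) + I"
      using \<open>e \<in># P u\<close> sum_P by (metis count_greater_zero_iff less_le_trans)
    then show "\<exists>i j. i < n \<and> j < n \<and> i \<noteq> j \<and> e = {i, j}" using edges by blast
  qed
  have s': "s * imbalance a b (\<Sum>u\<in>U. P u) z0 > 0" using s(2) sum_P by simp
  obtain S z1 s1 where sw: "s1 \<in> {1, -1}" "s1 * imbalance a b (\<Sum>u\<in>U. P u) z1 > 0"
      "z1 = z0 \<longrightarrow> s1 = s \<and> s * imbalance a b (\<Sum>u\<in>U. P u) z0 \<ge> 2"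
      "\<forall>e. int (count (\<Sum>u\<in>U. if u \<in> S then switch a b (P u) else P u) e)
         = int (count (\<Sum>u\<in>U. P u) e) + edge_shift n a b (\<lambda>x. s * indicator {z0} x + s1 * indicator {z1} x) e"
    using switch_subfamily[OF \<open>finite U\<close> pieces piece_edges ab(1) s(1) s'] by (elim exE conjE)
  have "\<forall>k. \<exists>ws. k < length R \<longrightarrow>
      is_cycle (length (R ! k)) ws \<and> cycle_edges ws = partial_switch a b (\<lambda>p. (k, p) \<in> S) (Ps k)"
    using Ps by (simp add: switch_pieces_def)
  then obtain ws where ws: "\<And>k. k < length R \<Longrightarrow>
      is_cycle (length (R ! k)) (ws k) \<and> cycle_edges (ws k) = partial_switch a b (\<lambda>p. (k, p) \<in> S) (Ps k)"
    by metis
  define R' where "R' = map ws [0..<length R]"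
  define I' where "I' = (if (length R, 0) \<in> S then switch a b I else I)"
  have "similar_packing n R I R' I'"
    using similar_packing_switch[of R ws a n b I] ws ab by (simp add: R'_def I'_def)
  moreover have switched:
    "(\<Sum>u\<in>U. if u \<in> S then switch a b (P u) else P u) = sum_list (map cycle_edges R') + I'"
    using sum_U[of "\<lambda>u X. if u \<in> S then switch a b X else X"] ws
    by (simp add: R'_def I'_def sum_list_sum_nth partial_switch_def)
  ultimately show ?thesis
    using sw sum_P by (intro exI[of _ R'] exI[of _ I'] exI[of _ z1] exI[of _ s1]) simp
qed

lemma count_add_two: "count (M + {#x, y#}) e = count M e + of_bool (e = x) + of_bool (e = y)"
  by auto

definition signed_edge :: "nat \<Rightarrow> nat \<Rightarrow> int \<Rightarrow> nat \<Rightarrow> nat set" where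
  "signed_edge a b s z = (if s = 1 then {a, z} else {b, z})"

lemma signed_edge_diff:
  "s \<in> {1, -1} \<Longrightarrow> of_bool (e = signed_edge a b s z) - of_bool (e = signed_edge b a s z)
     = s * (of_bool (e = {a, z}) - of_bool (e = {b, z}))"
  by (auto simp: signed_edge_def)

lemma imbalance_support:
  assumes "complete_multigraph lam n = X + L" "imbalance a b L z \<noteq> 0"
  shows "z \<in> {0..<n} - {a, b}"
proof -
  have "count L {a, z} = 0" "count L {b, z} = 0" if "z \<ge> n"
    using count_complete_multigraph_outside[OF that, of lam a] count_complete_multigraph_outside[OF that, of lam b]
    by (simp_all add: assms(1))
  then show ?thesis using assms(2) by (cases "z < n") (auto simp: imbalance_def split: if_splits)
qed

text \<open>The switching lemma. \<open>L\<close> is the leave of the packing; the new leave \<open>L'\<close> arises from it by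
  replacing an edge \<open>a z\<^sub>0\<close> by \<open>b z\<^sub>0\<close> (for \<open>s = 1\<close>, the other way round for \<open>s = -1\<close>), and
  likewise at a second vertex \<open>z\<^sub>1\<close> with sign \<open>s\<^sub>1\<close>.\<close>

lemma switching:
  assumes K: "complete_multigraph lam n = sum_list (map cycle_edges R) + I + L"
    and R: "\<forall>G\<in>set R. is_cycle (length G) G" and I: "I = {#} \<or> perfect_matching {0..<n} I"
    and ab: "a \<noteq> b" "a < n" "b < n"
    and s: "s \<in> {1, -1}" "s * imbalance a b L z0 > 0"
  shows "\<exists>R' I' z1 s1. similar_packing n R I R' I' \<and> s1 \<in> {1, -1}
    \<and> s1 * imbalance a b L z1 > 0 \<and> (z1 = z0 \<longrightarrow> s1 = s \<and> s * imbalance a b L z0 \<ge> 2)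
    \<and> (\<forall>L'. L' + {#signed_edge a b s z0, signed_edge a b s1 z1#} = L + {#signed_edge b a s z0, signed_edge b a s1 z1#}
       \<longrightarrow> complete_multigraph lam n = sum_list (map cycle_edges R') + I' + L')"
proof -
  let ?S = "sum_list (map cycle_edges R) + I"
  have imb: "imbalance a b ?S z = - imbalance a b L z" for z
    using imbalance_complete_multigraph[OF ab(2,3), of lam z] K by (simp add: imbalance_add)
  have edges: "\<forall>e\<in>#?S. \<exists>i j. i < n \<and> j < n \<and> i \<noteq> j \<and> e = {i, j}"
    using K edge_of_complete_multigraph by (metis union_iff)
  have "- s \<in> {1, -1}" "- s * imbalance a b ?S z0 > 0" using s imb by auto
  from packing_switch[OF R I edges ab this] obtain R' I' z1 s1 where sw: "similar_packing n R I R' I'" "s1 \<in> {1, -1}"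
      "s1 * imbalance a b ?S z1 > 0" "z1 = z0 \<longrightarrow> s1 = - s \<and> - s * imbalance a b ?S z0 \<ge> 2"
      "\<forall>e. int (count (sum_list (map cycle_edges R') + I') e)
         = int (count ?S e) + edge_shift n a b (\<lambda>x. - s * indicator {z0} x + s1 * indicator {z1} x) e"
    by (elim exE conjE)
  have z: "z0 \<in> {0..<n} - {a, b}" "z1 \<in> {0..<n} - {a, b}"
    using imbalance_support[OF K] s(2) sw(3) imb by (metis less_irrefl mult_zero_right neg_equal_0_iff_equal)+
  have s1': "- s1 \<in> {1, -1}" using sw(2) by auto
  have "complete_multigraph lam n = sum_list (map cycle_edges R') + I' + L'"
    if L': "L' + {#signed_edge a b s z0, signed_edge a b (- s1) z1#}
      = L + {#signed_edge b a s z0, signed_edge b a (- s1) z1#}" for L'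
  proof (rule multiset_eqI)
    fix e
    have "int (count L' e) + of_bool (e = signed_edge a b s z0) + of_bool (e = signed_edge a b (- s1) z1)
        = int (count L e) + of_bool (e = signed_edge b a s z0) + of_bool (e = signed_edge b a (- s1) z1)"
      using arg_cong[OF L', of "\<lambda>M. int (count M e)"] by (simp only: count_add_two of_nat_add of_nat_of_bool)
    moreover have "int (count (complete_multigraph lam n) e) = int (count ?S e) + int (count L e)"
      using K by simp
    ultimately have "int (count (complete_multigraph lam n) e) = int (count (sum_list (map cycle_edges R') + I' + L') e)"
      using sw(5)[rule_format, of e] edge_shift_two[OF z, of "- s" s1 e]
        signed_edge_diff[OF s(1), of e a b z0] signed_edge_diff[OF s1', of e a b z1]
      unfolding count_union of_nat_add by algebra
    then show "count (complete_multigraph lam n) e = count (sum_list (map cycle_edges R') + I' + L') e"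
      by simp
  qed
  moreover have "- s1 * imbalance a b L z1 > 0"
    "z1 = z0 \<longrightarrow> - s1 = s \<and> s * imbalance a b L z0 \<ge> 2"
    using sw(2,3,4) imb by auto
  ultimately show ?thesis
    using sw(1) s1' by (intro exI[of _ R'] exI[of _ I'] exI[of _ z1] exI[of _ "- s1"]) blast
qed

section \<open>Turning an \<open>m\<close>-cycle and a 2-cycle into an \<open>(m-1)\<close>-cycle and a 3-cycle\<close>

definition completable :: "nat \<Rightarrow> nat \<Rightarrow> nat list list \<Rightarrow> mgraph \<Rightarrow> nat \<Rightarrow> bool" where
  "completable lam n R I m \<longleftrightarrow> (\<exists>R' I' T1 T2. similar_packing n R I R' I' \<and> is_cycle m T1 \<and> is_cycle 3 T2
     \<and> complete_multigraph lam n = sum_list (map cycle_edges R') + I' + (cycle_edges T1 + cycle_edges T2))"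

lemma completableI:
  "similar_packing n R I R' I' \<Longrightarrow> is_cycle m T1 \<Longrightarrow> is_cycle 3 T2
    \<Longrightarrow> complete_multigraph lam n = sum_list (map cycle_edges R') + I' + (cycle_edges T1 + cycle_edges T2)
    \<Longrightarrow> completable lam n R I m"
  unfolding completable_def by blast

lemma completable_similar:
  "completable lam n R' I' m \<Longrightarrow> similar_packing n R I R' I' \<Longrightarrow> completable lam n R I m"
  unfolding completable_def by (meson similar_packing_trans)

text \<open>A 2-cycle \<open>[x\<^sub>0, y]\<close> hanging off the cycle at \<open>x\<^sub>0\<close>: one switch of \<open>y\<close> and \<open>x\<^sub>2\<close> turns the
  two into a triangle through \<open>x\<^sub>0\<close> and a cycle one shorter than the original one.\<close>

lemma completable_pendant:
  assumes K: "complete_multigraph lam n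
      = sum_list (map cycle_edges R) + I + (cycle_edges (x0 # x1 # x2 # x3 # rest) + cycle_edges [x0, y])"
    and R: "\<forall>G\<in>set R. is_cycle (length G) G" and I: "I = {#} \<or> perfect_matching {0..<n} I"
    and d: "distinct (x0 # x1 # x2 # x3 # rest)" "y \<notin> set (x0 # x1 # x2 # x3 # rest)"
    and lt: "x2 < n" "y < n"
  shows "completable lam n R I (3 + length rest)"
proof -
  define Q where "Q = path_edges (x3 # rest @ [x0])"
  define L where "L = cycle_edges (x0 # x1 # x2 # x3 # rest) + cycle_edges [x0, y]"
  have L_eq: "L = add_mset {x0, x1} (add_mset {x1, x2} (add_mset {x2, x3}
      (add_mset {x0, y} (add_mset {y, x0} Q))))"
    unfolding L_def Q_def by (simp add: cycle_edges_Cons)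
  have ne: "x0 \<noteq> x1" "x0 \<noteq> x2" "x0 \<noteq> x3" "x1 \<noteq> x2" "x1 \<noteq> x3" "x2 \<noteq> x3"
    "y \<noteq> x0" "y \<noteq> x1" "y \<noteq> x2" "y \<noteq> x3" using d by auto
  have Q: "count Q {x2, z} = 0" "count Q {y, z} = 0" for z
    using d count_path_edges_notin[of _ "x3 # rest @ [x0]"] by (auto simp: Q_def)
  have imb: "imbalance y x2 L = (\<lambda>z. 2 * of_bool (z = x0) - of_bool (z = x1) - of_bool (z = x3))"
    by (rule imbalance_eqI) (use ne Q in \<open>auto simp: L_eq doubleton_eq_iff\<close>)
  have K': "complete_multigraph lam n = sum_list (map cycle_edges R) + I + L"
    using K by (simp add: L_def)
  have s: "(1::int) \<in> {1, -1}" "1 * imbalance y x2 L x0 > 0" using imb ne by simp_all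
  obtain R' I' z1 s1 where sw: "similar_packing n R I R' I'" "s1 \<in> {1, -1}"
      "s1 * imbalance y x2 L z1 > 0" "z1 = x0 \<longrightarrow> s1 = 1 \<and> 1 * imbalance y x2 L x0 \<ge> 2"
      "\<forall>L'. L' + {#signed_edge y x2 1 x0, signed_edge y x2 s1 z1#}
         = L + {#signed_edge x2 y 1 x0, signed_edge x2 y s1 z1#}
         \<longrightarrow> complete_multigraph lam n = sum_list (map cycle_edges R') + I' + L'"
    using switching[OF K' R I ne(9) lt(2,1) s] by (elim exE conjE)
  have complete: "completable lam n R I (3 + length rest)"
    if "is_cycle (3 + length rest) T1" "is_cycle 3 T2"
      "cycle_edges T1 + cycle_edges T2 + {#signed_edge y x2 1 x0, signed_edge y x2 s1 z1#}
         = L + {#signed_edge x2 y 1 x0, signed_edge x2 y s1 z1#}" for T1 T2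
    using that sw(1,5) by (intro completableI) auto
  consider "z1 = x0" "s1 = 1" | "z1 = x1" "s1 = -1" | "z1 = x3" "s1 = -1"
    using sw(2,3,4) imb ne by (cases "z1 = x0"; cases "z1 = x1"; cases "z1 = x3") auto
  then show ?thesis
  proof cases
    case 1
    then show ?thesis
      using d by (intro complete[of "x0 # x2 # x3 # rest" "[x0, x1, x2]"])
        (auto simp: is_cycle_def L_eq Q_def signed_edge_def cycle_edges_Cons insert_commute add_mset_commute)
  next
    case 2
    then show ?thesis
      using d by (intro complete[of "x0 # x2 # x3 # rest" "[x0, x1, y]"])
        (auto simp: is_cycle_def L_eq Q_def signed_edge_def cycle_edges_Cons insert_commute add_mset_commute)
  next
    case 3
    then show ?thesis
      using d by (intro complete[of "x0 # y # x3 # rest" "[x0, x1, x2]"])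
        (auto simp: is_cycle_def L_eq Q_def signed_edge_def cycle_edges_Cons insert_commute add_mset_commute)
  qed
qed

lemma completable_chord_adjacent:
  assumes K: "complete_multigraph lam n
      = sum_list (map cycle_edges R) + I + (cycle_edges (x0 # A @ [y, d]) + cycle_edges [x0, y])"
    and d: "distinct (x0 # A @ [y, d])" and R: "\<forall>G\<in>set R. is_cycle (length G) G"
  shows "completable lam n R I (length A + 2)"
proof (rule completableI[OF similar_packing_refl[OF R]])
  show "is_cycle (length A + 2) (x0 # A @ [y])" "is_cycle 3 [x0, y, d]"
    using d by (auto simp: is_cycle_def)
  have "cycle_edges (x0 # A @ [y, d]) + cycle_edges [x0, y] = cycle_edges (x0 # A @ [y]) + cycle_edges [x0, y, d]"
    using cycle_edges_split[of x0 A y "[d]"] cycle_edges_split[of x0 A y "[]"]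
    by (simp add: cycle_edges_Cons insert_commute add_mset_commute)
  then show "complete_multigraph lam n
      = sum_list (map cycle_edges R) + I + (cycle_edges (x0 # A @ [y]) + cycle_edges [x0, y, d])"
    using K by simp
qed

text \<open>A 2-cycle \<open>[x\<^sub>0, y]\<close> forming a chord of the cycle: switching \<open>y\<close> with its successor \<open>b\<close>
  either produces the triangle directly or moves the chord one step along the cycle.\<close>

lemma chord_switch:
  assumes K: "complete_multigraph lam n
      = sum_list (map cycle_edges R) + I + (cycle_edges (x0 # A @ y # b # c # B) + cycle_edges [x0, y])"
    and R: "\<forall>G\<in>set R. is_cycle (length G) G" and I: "I = {#} \<or> perfect_matching {0..<n} I"
    and dC: "distinct (x0 # A @ y # b # c # B)" and lt: "y < n" "b < n"
  shows "completable lam n R I (length A + 3 + length B)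
    \<or> (\<exists>R' I'. similar_packing n R I R' I' \<and> complete_multigraph lam n
          = sum_list (map cycle_edges R') + I' + (cycle_edges (x0 # A @ y # b # c # B) + cycle_edges [x0, b]))"
proof -
  define C where "C = x0 # A @ y # b # c # B"
  define p where "p = last (x0 # A)"
  define P1 where "P1 = path_edges (x0 # A @ [y])"
  define P2 where "P2 = path_edges (c # B @ [x0])"
  define L where "L = cycle_edges C + cycle_edges [x0, y]"
  have ne: "x0 \<noteq> y" "x0 \<noteq> b" "x0 \<noteq> c" "y \<noteq> b" "y \<noteq> c" "b \<noteq> c" "p \<noteq> y" "p \<noteq> b" "p \<noteq> c"
    using dC by (auto simp: p_def)
  have L_eq: "L = P1 + add_mset {y, b} (add_mset {b, c} (add_mset {x0, y} (add_mset {y, x0} P2)))"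
    unfolding L_def C_def P1_def P2_def using cycle_edges_split[of x0 A y "b # c # B"]
    by (simp add: cycle_edges_Cons)
  have P: "count P1 {b, z} = 0" "count P2 {b, z} = 0" "count P2 {y, z} = 0" for z
    using dC count_path_edges_notin[of b] count_path_edges_notin[of y] by (auto simp: P1_def P2_def)
  have P1_y: "count P1 {y, z} = of_bool (z = p)" if "z \<noteq> y" for z
    using count_path_edges_snoc[of y "x0 # A" z] dC that by (auto simp: P1_def p_def)
  have imb: "imbalance y b L = (\<lambda>z. of_bool (z = p) + 2 * of_bool (z = x0) - of_bool (z = c))"
    by (rule imbalance_eqI) (use ne P P1_y in \<open>auto simp: L_eq doubleton_eq_iff\<close>)
  have K': "complete_multigraph lam n = sum_list (map cycle_edges R) + I + L"
    using K by (simp add: L_def C_def)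
  have s: "(1::int) \<in> {1, -1}" "1 * imbalance y b L x0 > 0" using imb ne by simp_all
  obtain R' I' z1 s1 where sw: "similar_packing n R I R' I'" "s1 \<in> {1, -1}"
      "s1 * imbalance y b L z1 > 0" "z1 = x0 \<longrightarrow> s1 = 1 \<and> 1 * imbalance y b L x0 \<ge> 2"
      "\<forall>L'. L' + {#signed_edge y b 1 x0, signed_edge y b s1 z1#}
         = L + {#signed_edge b y 1 x0, signed_edge b y s1 z1#}
         \<longrightarrow> complete_multigraph lam n = sum_list (map cycle_edges R') + I' + L'"
    using switching[OF K' R I ne(4) lt s] by (elim exE conjE)
  have K'': "complete_multigraph lam n = sum_list (map cycle_edges R') + I' + L'"
    if "L' + {#signed_edge y b 1 x0, signed_edge y b s1 z1#} = L + {#signed_edge b y 1 x0, signed_edge b y s1 z1#}"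
    for L'
    using sw(5) that by blast
  have triangle: "completable lam n R I (length A + 3 + length B)"
    if "is_cycle (length A + 3 + length B) T1"
      "cycle_edges T1 + cycle_edges [x0, y, b] + {#signed_edge y b 1 x0, signed_edge y b s1 z1#}
         = L + {#signed_edge b y 1 x0, signed_edge b y s1 z1#}" for T1
    using that sw(1) K'' ne by (intro completableI[of n R I R' I' _ T1 "[x0, y, b]"]) (auto simp: is_cycle_def)
  consider "z1 = x0" "s1 = 1" | "z1 = c" "s1 = -1" | "z1 = p" "p \<noteq> x0" "s1 = 1"
    using sw(2,3,4) imb ne by (cases "z1 = x0"; cases "z1 = c"; cases "z1 = p") auto
  then show ?thesis
  proof cases
    case 1
    have "cycle_edges C + cycle_edges [x0, b] + {#signed_edge y b 1 x0, signed_edge y b s1 z1#}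
        = L + {#signed_edge b y 1 x0, signed_edge b y s1 z1#}"
      using 1 by (simp add: L_def signed_edge_def cycle_edges_Cons insert_commute add_mset_commute)
    then show ?thesis using K'' sw(1) by (auto simp: C_def)
  next
    case 2
    have "cycle_edges (x0 # A @ y # c # B) = P1 + add_mset {y, c} P2"
      using cycle_edges_split[of x0 A y "c # B"] by (simp add: P1_def P2_def)
    then show ?thesis
      using 2 dC
      by (intro disjI1 triangle[of "x0 # A @ y # c # B"])
        (auto simp: is_cycle_def L_eq signed_edge_def cycle_edges_Cons insert_commute add_mset_commute)
  next
    case 3
    then obtain A' where A: "A = A' @ [p]"
      by (metis append_butlast_last_id last_ConsL last_ConsR p_def)
    have "P1 = path_edges (x0 # A' @ [p]) + {#{p, y}#}"
      using path_edges_append[of "x0 # A'" p "[y]"] by (simp add: P1_def A)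
    moreover have "cycle_edges (x0 # A @ b # c # B)
        = path_edges (x0 # A' @ [p]) + add_mset {p, b} (add_mset {b, c} P2)"
      using cycle_edges_split[of x0 A' p "b # c # B"] by (simp add: P2_def A)
    ultimately show ?thesis
      using 3 dC
      by (intro disjI1 triangle[of "x0 # A @ b # c # B"])
        (auto simp: is_cycle_def L_eq signed_edge_def cycle_edges_Cons insert_commute add_mset_commute)
  qed
qed

lemma completable_chord:
  assumes "B \<noteq> []"
    and "complete_multigraph lam n
      = sum_list (map cycle_edges R) + I + (cycle_edges (x0 # A @ y # B) + cycle_edges [x0, y])"
    and "\<forall>G\<in>set R. is_cycle (length G) G" and "I = {#} \<or> perfect_matching {0..<n} I"
    and "distinct (x0 # A @ y # B)" and "\<forall>v\<in>set (x0 # A @ y # B). v < n"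
  shows "completable lam n R I (length A + 1 + length B)"
  using assms
proof (induction "length B" arbitrary: A y B R I rule: less_induct)
  case less
  obtain b B' where B: "B = b # B'" using less.prems(1) by (cases B) auto
  show ?case
  proof (cases B')
    case Nil
    then show ?thesis
      using completable_chord_adjacent[of lam n R I x0 A y b] less.prems B by simp
  next
    case (Cons c B'')
    have "y < n" "b < n" using less.prems(6) B by auto
    then have "completable lam n R I (length A + 3 + length B'')
      \<or> (\<exists>R' I'. similar_packing n R I R' I' \<and> complete_multigraph lam n
          = sum_list (map cycle_edges R') + I' + (cycle_edges (x0 # A @ y # b # c # B'') + cycle_edges [x0, b]))"
      using chord_switch[OF _ less.prems(3,4)] less.prems(2,5) B Cons by simp
    then show ?thesis
    proof
      assume "completable lam n R I (length A + 3 + length B'')"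
      moreover have "length A + 3 + length B'' = length A + 1 + length B" using B Cons by simp
      ultimately show ?thesis by simp
    next
      assume "\<exists>R' I'. similar_packing n R I R' I' \<and> complete_multigraph lam n
          = sum_list (map cycle_edges R') + I' + (cycle_edges (x0 # A @ y # b # c # B'') + cycle_edges [x0, b])"
      then obtain R' I' where sim: "similar_packing n R I R' I'" and K': "complete_multigraph lam n
          = sum_list (map cycle_edges R') + I' + (cycle_edges (x0 # (A @ [y]) @ b # c # B'') + cycle_edges [x0, b])"
        by auto
      have "\<forall>G\<in>set R'. is_cycle (length G) G" "I' = {#} \<or> perfect_matching {0..<n} I'"
        using similar_packing_valid[OF sim less.prems(4)] by blast+
      then have "completable lam n R' I' (length (A @ [y]) + 1 + length (c # B''))"
        using K' less.prems(5,6) B Cons by (intro less.hyps) auto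
      then show ?thesis using completable_similar[OF _ sim] B Cons by simp
    qed
  qed
qed

lemma two_cycle_through:
  assumes "is_cycle 2 P" "x \<in> set P"
  obtains y where "y \<in> set P" "y \<noteq> x" "cycle_edges P = cycle_edges [x, y]"
proof -
  obtain p q where P: "P = [p, q]" "p \<noteq> q"
    using assms(1) by (auto simp: is_cycle_def numeral_2_eq_2 length_Suc_conv)
  have "cycle_edges [p, q] = cycle_edges [q, p]"
    by (simp add: cycle_edges_Cons insert_commute)
  then show ?thesis using that P assms(2) by auto
qed

lemma completable_shared_vertex:
  assumes K: "complete_multigraph lam n
      = sum_list (map cycle_edges R) + I + (cycle_edges C + cycle_edges P)"
    and R: "\<forall>G\<in>set R. is_cycle (length G) G" and I: "I = {#} \<or> perfect_matching {0..<n} I"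
    and C: "is_cycle (length C) C" "length C \<ge> 4" "\<forall>v\<in>set C. v < n"
    and P: "is_cycle 2 P" "\<forall>v\<in>set P. v < n"
    and shared: "set C \<inter> set P \<noteq> {}"
  shows "completable lam n R I (length C - 1)"
proof -
  obtain x0 where "x0 \<in> set C" "x0 \<in> set P" using shared by blast
  obtain y where y: "y \<in> set P" "y \<noteq> x0" "cycle_edges P = cycle_edges [x0, y]"
    using two_cycle_through[OF P(1) \<open>x0 \<in> set P\<close>] .
  have xy: "x0 \<in> set C" "cycle_edges P = cycle_edges [x0, y]" "y \<noteq> x0" "y < n"
    using \<open>x0 \<in> set C\<close> y P(2) by auto
  obtain cs where cs: "cycle_edges C = cycle_edges (x0 # cs)" "mset (x0 # cs) = mset C"
    using cycle_edges_rotate_to[OF xy(1)] .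
  have dcs: "distinct (x0 # cs)"
    using mset_eq_imp_distinct_iff[OF cs(2)] C(1) by (simp add: is_cycle_def)
  have lcs: "length cs = length C - 1" using mset_eq_length[OF cs(2)] by simp
  have ltcs: "\<forall>v\<in>set (x0 # cs). v < n" using mset_eq_setD[OF cs(2)] C(3) by simp
  have K': "complete_multigraph lam n
      = sum_list (map cycle_edges R) + I + (cycle_edges (x0 # cs) + cycle_edges [x0, y])"
    using K cs(1) xy(2) by simp
  show ?thesis
  proof (cases "y \<in> set cs")
    case True
    then obtain A B where A: "cs = A @ y # B" by (meson split_list)
    show ?thesis
    proof (cases "B = []")
      case False
      then show ?thesis
        using completable_chord[OF False K'[unfolded A] R I] dcs ltcs A lcs by simp
    next
      case True
      text \<open>The chord joins \<open>x\<^sub>0\<close> to its predecessor; traverse the cycle backwards.\<close>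
      have "cycle_edges (x0 # cs) = cycle_edges (x0 # [] @ y # rev A)"
        using cycle_edges_Cons_rev[of x0 cs] A True by simp
      moreover have "rev A \<noteq> []" using lcs C(2) A True by auto
      ultimately show ?thesis
        using completable_chord[of "rev A" lam n R I x0 "[]" y] K' R I dcs ltcs A True lcs by auto
    qed
  next
    case False
    obtain x1 x2 x3 rest where cs4: "cs = x1 # x2 # x3 # rest"
      using lcs C(2) by (cases cs; cases "tl cs"; cases "tl (tl cs)") auto
    have "completable lam n R I (3 + length rest)"
      using completable_pendant[OF K'[unfolded cs4] R I] dcs False xy(3,4) ltcs cs4 by auto
    moreover have "3 + length rest = length C - 1" using lcs cs4 by simp
    ultimately show ?thesis by simp
  qed
qed

lemma exists_permutation_map_eq:
  "image_mset f (mset xs) = mset ys \<Longrightarrow> \<exists>zs. mset zs = mset xs \<and> map f zs = ys"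
proof (induction ys arbitrary: xs)
  case (Cons y ys)
  then obtain x where x: "x \<in> set xs" "f x = y"
    by (metis image_iff list.set_intros(1) set_image_mset set_mset_mset)
  then have "image_mset f (mset (remove1 x xs)) = mset ys"
    using Cons.prems by (simp add: image_mset_Diff)
  then obtain zs where "mset zs = mset (remove1 x xs)" "map f zs = ys"
    using Cons.IH by blast
  then show ?case using x by (intro exI[of _ "x # zs"]) simp
qed simp

lemma is_decomposition_cycles:
  assumes "is_decomposition V E N Gs I"
  shows "\<forall>G\<in>set Gs. is_cycle (length G) G" "map length Gs = N"
    "E = sum_list (map cycle_edges Gs) + I" "I = {#} \<or> perfect_matching V I"
proof -
  have len: "length Gs = length N" and cyc: "\<forall>i<length N. is_cycle (N ! i) (Gs ! i)"
    using assms unfolding is_decomposition_def by blast+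
  then show "map length Gs = N"
    by (intro nth_equalityI) (auto simp: is_cycle_def)
  with cyc show "\<forall>G\<in>set Gs. is_cycle (length G) G"
    by (metis in_set_conv_nth length_map nth_map)
  show "E = sum_list (map cycle_edges Gs) + I" "I = {#} \<or> perfect_matching V I"
    using assms unfolding is_decomposition_def by auto
qed

lemma has_decomposition_replace:
  assumes dec: "is_decomposition V E N Gs I"
    and Gs': "mset (map length Gs') = mset N'" "\<forall>G\<in>set Gs'. is_cycle (length G) G"
    and E: "E = sum_list (map cycle_edges Gs') + I'"
    and I': "I = {#} \<longrightarrow> I' = {#}" "perfect_matching V I \<longrightarrow> perfect_matching V I'"
  shows "has_decomposition V E N'"
proof -
  obtain zs where zs: "mset zs = mset Gs'" "map length zs = N'"
    using exists_permutation_map_eq[of length Gs' N'] Gs'(1) by auto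
  have "sum_list (map cycle_edges zs) = sum_list (map cycle_edges Gs')"
    by (metis zs(1) mset_map sum_mset_sum_list)
  moreover have "\<forall>G\<in>set zs. is_cycle (length G) G"
    using Gs'(2) mset_eq_setD[OF zs(1)] by simp
  ultimately have "is_decomposition V E N' zs I'"
    using dec E I' zs(2) unfolding is_decomposition_def
    by (auto simp: is_cycle_def)
  then show ?thesis unfolding has_decomposition_def by blast
qed

lemma mset_remove1_two:
  assumes "x \<in> set xs" "y \<in> set xs" "x \<noteq> y"
  shows "mset xs = mset (remove1 y (remove1 x xs)) + {#x, y#}"
proof -
  have "{#x, y#} \<subseteq># mset xs" using assms by (simp add: insert_subset_eq_iff in_diff_count)
  then have "mset xs - {#x, y#} + {#x, y#} = mset xs" by (rule subset_mset.diff_add)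
  moreover have "mset (remove1 y (remove1 x xs)) = mset xs - {#x, y#}"
    by (simp add: add_mset_commute)
  ultimately show ?thesis by simp
qed

lemma has_decomposition_shared_vertex:
  assumes dec: "is_decomposition {0..<n} (complete_multigraph lam n) N Gs I"
    and C: "C \<in> set Gs" "length C \<ge> 4" and P: "P \<in> set Gs" "length P = 2"
    and shared: "set C \<inter> set P \<noteq> {}"
    and N': "mset N' + {#length C, 2#} = mset N + {#length C - 1, 3#}"
  shows "has_decomposition {0..<n} (complete_multigraph lam n) N'"
proof -
  let ?K = "complete_multigraph lam n"
  note cyc = is_decomposition_cycles[OF dec]
  define R where "R = remove1 P (remove1 C Gs)"
  have "C \<noteq> P" using C(2) P(2) by auto
  with C(1) P(1) have Gs: "mset Gs = mset R + {#C, P#}"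
    unfolding R_def by (rule mset_remove1_two)
  then have "sum_list (map cycle_edges Gs) = sum_list (map cycle_edges R) + (cycle_edges C + cycle_edges P)"
    using arg_cong[OF Gs, of "\<lambda>X. sum_mset (image_mset cycle_edges X)"]
    by (simp add: sum_mset_sum_list[symmetric] mset_map)
  then have K: "?K = sum_list (map cycle_edges R) + I + (cycle_edges C + cycle_edges P)"
    using cyc(3) by (simp add: ac_simps)
  have "set R \<subseteq> set Gs" unfolding R_def by (meson set_remove1_subset subset_trans)
  then have R: "\<forall>G\<in>set R. is_cycle (length G) G" using cyc(1) by blast
  have "cycle_edges C + cycle_edges P \<subseteq># ?K"
    unfolding K by (rule mset_subset_eq_add_right)
  then have sub: "cycle_edges C \<subseteq># ?K" "cycle_edges P \<subseteq># ?K"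
    using mset_subset_eq_add_left[of "cycle_edges C" "cycle_edges P"]
      mset_subset_eq_add_right[of "cycle_edges P" "cycle_edges C"] subset_mset.order_trans by blast+
  have CP: "is_cycle (length C) C" "is_cycle (length P) P" using cyc(1) C(1) P(1) by auto
  have "\<forall>v\<in>set C. v < n" "\<forall>v\<in>set P. v < n"
    using cycle_vertices_less[OF CP(1) sub(1)] cycle_vertices_less[OF CP(2) sub(2)] by blast+
  with CP have "completable lam n R I (length C - 1)"
    using completable_shared_vertex[OF K R cyc(4) _ C(2) _ _ _ shared] P(2) by simp
  then obtain R' I' T1 T2 where sim: "similar_packing n R I R' I'"
      and T: "is_cycle (length C - 1) T1" "is_cycle 3 T2"
      and K': "?K = sum_list (map cycle_edges R') + I' + (cycle_edges T1 + cycle_edges T2)"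
    unfolding completable_def by blast
  have "mset N = image_mset length (mset Gs)" using cyc(2) by (metis mset_map)
  then have "mset N = mset (map length R) + {#length C, 2#}" using Gs P(2) by simp
  then have lengths: "mset (map length (R' @ [T1, T2])) = mset N'"
    using sim T N' by (simp add: similar_packing_def is_cycle_def)
  have cycles: "\<forall>G\<in>set (R' @ [T1, T2]). is_cycle (length G) G"
    using sim T by (auto simp: similar_packing_def is_cycle_def)
  have "?K = sum_list (map cycle_edges (R' @ [T1, T2])) + I'"
    using K' by (simp add: ac_simps)
  from has_decomposition_replace[OF dec lengths cycles this] sim show ?thesis
    by (simp add: similar_packing_def)
qed

theorem mainTheorem10:
  fixes M :: "nat list" and lam n m :: nat
  assumes "lam > 0" and "n > 0" and "m \<ge> 3"
    and "\<exists>Gs I i j. is_decomposition {0..<n} (complete_multigraph lam n) (M @ [m, 2]) Gs I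
            \<and> i < length Gs \<and> j < length Gs \<and> length (Gs ! i) = m \<and> length (Gs ! j) = 2
            \<and> set (Gs ! i) \<inter> set (Gs ! j) \<noteq> {}"
  shows "has_decomposition {0..<n} (complete_multigraph lam n) (M @ [m - 1, 3])"
proof -
  obtain Gs I i j where dec: "is_decomposition {0..<n} (complete_multigraph lam n) (M @ [m, 2]) Gs I"
    and ij: "i < length Gs" "j < length Gs" "length (Gs ! i) = m" "length (Gs ! j) = 2"
      "set (Gs ! i) \<inter> set (Gs ! j) \<noteq> {}"
    using assms(4) by blast
  show ?thesis
  proof (cases "m = 3")
    case True
    note cyc = is_decomposition_cycles[OF dec]
    have "mset (map length Gs) = mset (M @ [m - 1, 3])" using cyc(2) True by (simp add: add_mset_commute)
    from has_decomposition_replace[OF dec this cyc(1) cyc(3)] show ?thesis by simp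
  next
    case False
    then show ?thesis
      using has_decomposition_shared_vertex[OF dec, of "Gs ! i" "Gs ! j"] ij assms(3) by simp
  qed
qed

end
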